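(* Let $n\ge1$ and let $f(z)=\sum_{m=0}^\infty f_m z^m$ be analytic in a neighborhood of $0$. Then \[ r_n(f;z)=(-1)^n\frac{(n!)^2}{((2n)!)^2}\, f_{2n+1}z^{2n+1}+O(z^{2n+2}) \qquad (z\to 0). \] In particular, $r_n(p;z)\equiv 0$ for every polynomial $p$ of degree at most $2n$.
   Context: For $n\ge1$ let $y_n(z)=\sum_{k=0}^{n}\frac{(n+k)!}{(n-k)!\,k!}\left(\frac{z}{2}\right)^k$ be the $n$-th Bessel polynomial and let $\alpha_{n1},\dots,\alpha_{nn}$ be its zeros (they are simple). Put $a_{nk}=1-\alpha_{nk}/2$ and $b_{nk}=1+\alpha_{nk}/2$ for $k=1,\dots,n$. For $f$ analytic near $0$ define the remainder $r_n(f;z)=zf'(z)-\sum_{k=1}^n\big(f(a_{nk}z)-f(b_{nk}z)\big)$ (defined for $z$ near $0$). *)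

theory Defs
  imports "HOL-Complex_Analysis.Complex_Analysis" "HOL-Library.Landau_Symbols"
    "HOL-Computational_Algebra.Polynomial"
begin

definition bessel_poly :: "nat \<Rightarrow> complex \<Rightarrow> complex" where
  "bessel_poly n z = (\<Sum>k=0..n. of_real (fact (n+k) / (fact (n-k) * fact k)) * (z/2)^k)"

text \<open>The zeros alpha_{n1},...,alpha_{nn} of y_n (they are simple, so the set has n elements).\<close>
definition bessel_zeros :: "nat \<Rightarrow> complex set" where
  "bessel_zeros n = {z. bessel_poly n z = 0}"

definition bessel_remainder :: "nat \<Rightarrow> (complex \<Rightarrow> complex) \<Rightarrow> complex \<Rightarrow> complex" where
  "bessel_remainder n f z = z * deriv f z
     - (\<Sum>\<alpha>\<in>bessel_zeros n. f ((1 - \<alpha>/2) * z) - f ((1 + \<alpha>/2) * z))"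

definition taylor_coeff :: "(complex \<Rightarrow> complex) \<Rightarrow> nat \<Rightarrow> complex" where
  "taylor_coeff f m = (deriv ^^ m) f 0 / fact m"

end

theory Submission
  imports Defs "HOL-Computational_Algebra.Fundamental_Theorem_Algebra"
begin

text \<open>
  Let \<open>Q(z) = \<Prod>\<^sub>\<alpha> (1 - \<alpha> z)\<close> be the reversed Bessel polynomial. Both \<open>Q(z)\<close> and
  \<open>e^(2z) Q(-z)\<close> satisfy \<open>z w'' - 2(z + n) w' + 2n w = 0\<close>, hence
  \<open>Q(z) - e^(2z) Q(-z) = O(z^(2n+1))\<close>. Taking logarithmic derivatives, where
  \<open>Q'/Q = - \<Sum>\<^sub>j p(j+1) z^j\<close> with the power sums \<open>p(j) = \<Sum>\<^sub>\<alpha> \<alpha>^j\<close> of the zeros, gives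
  \<open>p(1) = -1\<close>, \<open>p(2k+1) = 0\<close> for \<open>0 < k < n\<close>, and \<open>p(2n+1)\<close> in terms of the first nonzero
  coefficient of \<open>Q(z) - e^(2z) Q(-z)\<close>, an alternating binomial sum.
  The \<open>m\<close>-th Taylor coefficient of \<open>r\<^sub>n(f; z)\<close> is \<open>(m - \<Sum>\<^sub>\<alpha> ((1 - \<alpha>/2)^m - (1 + \<alpha>/2)^m)) f\<^sub>m\<close>;
  expanding binomially, only odd power sums survive, and for \<open>m \<le> 2n + 1\<close> only \<open>p(1)\<close> and
  \<open>p(2n+1)\<close> contribute.
\<close>

unbundle no vec_syntax

section \<open>Power series and binomial sums\<close>

lemma fps_mult_nth_low_vanishing:
  fixes A B :: "'a :: comm_semiring_1 fps"
  assumes "\<And>i. i < N \<Longrightarrow> B $ i = 0" and "j \<le> N"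
  shows "(A * B) $ j = (if j = N then A $ 0 * B $ N else 0)"
proof -
  have "(A * B) $ j = (\<Sum>i=0..j. A $ i * B $ (j - i))" by (rule fps_mult_nth)
  also have "\<dots> = (\<Sum>i=0..j. if i = 0 \<and> j = N then A $ 0 * B $ N else 0)"
    using assms by (intro sum.cong) auto
  finally show ?thesis by simp
qed

lemma fps_deriv_compose_uminus_X:
  "fps_deriv (A oo - fps_X) = - (fps_deriv A oo - fps_X :: 'a :: comm_ring_1 fps)"
  by (rule fps_ext) (simp add: fps_compose_uminus')

lemma fps_deriv_prod_linear_factors:
  fixes S :: "'a :: field set"
  assumes "finite S"
  shows "fps_deriv (\<Prod>a\<in>S. 1 - fps_const a * fps_X) =
         (\<Prod>a\<in>S. 1 - fps_const a * fps_X) * Abs_fps (\<lambda>j. - (\<Sum>a\<in>S. a ^ Suc j))"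
  using assms
proof (induction S rule: finite_induct)
  case empty
  then show ?case by (simp add: fps_eq_iff)
next
  case (insert a S)
  let ?P = "\<Prod>a\<in>S. 1 - fps_const a * fps_X"
  let ?G = "Abs_fps (\<lambda>j. a ^ Suc j)"
  have geometric: "fps_const a = (1 - fps_const a * fps_X) * ?G"
  proof (rule fps_ext)
    fix j
    show "fps_const a $ j = ((1 - fps_const a * fps_X) * ?G) $ j"
      by (cases j) (simp_all add: algebra_simps)
  qed
  have "fps_deriv (\<Prod>a\<in>insert a S. 1 - fps_const a * fps_X) = fps_deriv ((1 - fps_const a * fps_X) * ?P)"
    using insert by simp
  also have "\<dots> = (1 - fps_const a * fps_X) * fps_deriv ?P - fps_const a * ?P"
    by (simp add: algebra_simps flip: fps_const_neg)
  also have "\<dots> = (1 - fps_const a * fps_X) * (?P * Abs_fps (\<lambda>j. - (\<Sum>b\<in>S. b ^ Suc j)))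
      - ((1 - fps_const a * fps_X) * ?G) * ?P"
    by (simp only: insert.IH flip: geometric)
  also have "\<dots> = (1 - fps_const a * fps_X) * ?P * (Abs_fps (\<lambda>j. - (\<Sum>b\<in>S. b ^ Suc j)) - ?G)"
    by (simp add: algebra_simps)
  also have "Abs_fps (\<lambda>j. - (\<Sum>b\<in>S. b ^ Suc j)) - ?G = Abs_fps (\<lambda>j. - (\<Sum>b\<in>insert a S. b ^ Suc j))"
    using insert by (simp add: fps_eq_iff)
  finally show ?case using insert by simp
qed

lemma bigo_power_at_0_if_fps_nth_vanish:
  fixes h :: "complex \<Rightarrow> complex"
  assumes "h has_fps_expansion H" and "\<And>m. m < N \<Longrightarrow> H $ m = 0"
  shows "h \<in> O[at 0](\<lambda>z. z ^ N)"
proof (cases "H = 0")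
  case True
  then have "eventually (\<lambda>z. h z = 0) (at 0)"
    using assms(1) by (auto simp: has_fps_expansion_def eventually_at_filter elim: eventually_mono)
  from landau_o.big.in_cong[OF this] show ?thesis by simp
next
  case False
  define g where "g z = (if z = 0 then H $ N else h z / z ^ N)" for z
  have "g has_fps_expansion fps_shift N H"
    unfolding g_def using False assms by (intro has_fps_expansion_shift subdegree_geI) auto
  then have "g \<in> O[at 0](\<lambda>_. 1)"
    by (intro continuous_imp_bigo_1 has_fps_expansion_imp_continuous)
  then have "(\<lambda>z. z ^ N * g z) \<in> O[at 0](\<lambda>z. z ^ N * 1)"
    by (intro landau_o.big.mult) simp_all
  moreover have "eventually (\<lambda>z. z ^ N * g z = h z) (at 0)"
    by (auto simp: g_def eventually_at_filter)
  ultimately show ?thesis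
    using landau_o.big.in_cong[of "\<lambda>z. z ^ N * g z" h] by simp
qed

text \<open>Both sides equal the Beta integral \<open>\<integral>\<^sub>0\<^sup>1 x^(a-1) (1 - x)^m dx\<close>.\<close>
lemma sum_alternating_binomial_divide:
  fixes a :: real
  assumes "a > 0"
  shows "(\<Sum>i\<le>m. (-1) ^ i * real (m choose i) / (a + real i)) = fact m / pochhammer a (Suc m)"
  using assms
proof (induction m arbitrary: a)
  case 0
  then show ?case by simp
next
  case (Suc m)
  define S where "S m a = (\<Sum>i\<le>m. (-1) ^ i * real (m choose i) / (a + real i))" for m a
  define T where "T = pochhammer a (Suc (Suc m))"
  have "S (Suc m) a = 1 / a + (\<Sum>i\<le>m. (-1) ^ Suc i * real (Suc m choose Suc i) / (a + real (Suc i)))"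
    unfolding S_def by (subst sum.atMost_Suc_shift) simp
  also have "\<dots> = (1 / a + (\<Sum>i\<le>m. (-1) ^ Suc i * real (m choose Suc i) / (a + real (Suc i))))
      - (\<Sum>i\<le>m. (-1) ^ i * real (m choose i) / (a + real (Suc i)))"
  proof -
    have "(-1) ^ Suc i * (x + y) / d = (-1) ^ Suc i * y / d - (-1) ^ i * x / d" for i and x y d :: real
      by (cases "d = 0") (simp_all add: field_simps)
    then show ?thesis
      unfolding add_diff_eq[symmetric] sum_subtractf[symmetric] binomial_Suc_Suc of_nat_add by simp
  qed
  also have "1 / a + (\<Sum>i\<le>m. (-1) ^ Suc i * real (m choose Suc i) / (a + real (Suc i))) = S m a"
  proof -
    have "S m a = (\<Sum>i\<le>Suc m. (-1) ^ i * real (m choose i) / (a + real i))"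
      by (simp add: S_def)
    also have "\<dots> = 1 / a + (\<Sum>i\<le>m. (-1) ^ Suc i * real (m choose Suc i) / (a + real (Suc i)))"
      by (subst sum.atMost_Suc_shift) simp
    finally show ?thesis ..
  qed
  also have "S m a = fact m * (a + real (Suc m)) / T"
    using Suc pochhammer_pos[of a "Suc m"] by (simp add: S_def T_def pochhammer_rec'[of a "Suc m"])
  also have "(\<Sum>i\<le>m. (-1) ^ i * real (m choose i) / (a + real (Suc i))) = fact m * a / T"
    using Suc.IH[of "a + 1"] Suc.prems pochhammer_pos[of "a + 1" "Suc m"]
    by (simp add: T_def pochhammer_rec[of a "Suc m"] add_ac)
  finally show ?case
    by (simp add: S_def T_def diff_divide_distrib[symmetric] algebra_simps)
qed

lemma sum_alternating_binomial_divide_reflected: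
  "(\<Sum>j\<le>n. (-1) ^ j * real (n choose j) / real (2 * n + 1 - j)) = (-1) ^ n * (fact n)\<^sup>2 / fact (2 * n + 1)"
proof -
  have "(\<Sum>j\<le>n. (-1) ^ j * real (n choose j) / real (2 * n + 1 - j))
      = (\<Sum>i\<le>n. (-1) ^ (n - i) * real (n choose (n - i)) / real (2 * n + 1 - (n - i)))"
    unfolding atMost_atLeast0 by (subst sum.atLeastAtMost_rev) simp
  also have "\<dots> = (\<Sum>i\<le>n. (-1) ^ n * ((-1) ^ i * real (n choose i) / (real (n + 1) + real i)))"
  proof (intro sum.cong refl)
    fix i assume "i \<in> {..n}"
    then have "i \<le> n" by simp
    then have "(-1 :: real) ^ (n - i) = (-1) ^ (n + i)" "2 * n + 1 - (n - i) = n + 1 + i"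
        "n choose (n - i) = n choose i"
      by (simp_all add: neg_one_power_add_eq_neg_one_power_diff binomial_symmetric[symmetric])
    with \<open>i \<le> n\<close> show "(-1) ^ (n - i) * real (n choose (n - i)) / real (2 * n + 1 - (n - i))
        = (-1) ^ n * ((-1) ^ i * real (n choose i) / (real (n + 1) + real i))"
      by (simp add: power_add add.assoc)
  qed
  also have "\<dots> = (-1) ^ n * (\<Sum>i\<le>n. (-1) ^ i * real (n choose i) / (real (n + 1) + real i))"
    by (rule sum_distrib_left[symmetric])
  also have "(\<Sum>i\<le>n. (-1) ^ i * real (n choose i) / (real (n + 1) + real i))
      = fact n / pochhammer (real (n + 1)) (Suc n)"
    by (rule sum_alternating_binomial_divide) simp
  also have "pochhammer (real (n + 1)) (Suc n) = fact (2 * n + 1) / fact n"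
  proof -
    have "pochhammer (1 :: real) (n + Suc n) = pochhammer 1 n * pochhammer (1 + real n) (Suc n)"
      by (rule pochhammer_product')
    moreover have "n + Suc n = 2 * n + 1" "1 + real n = real (n + 1)" by simp_all
    ultimately have "fact (2 * n + 1) = fact n * pochhammer (real (n + 1)) (Suc n)"
      by (simp only: pochhammer_fact)
    then show ?thesis by simp
  qed
  finally show ?thesis
    by (simp add: power2_eq_square)
qed

lemma binomial_difference_expansion:
  "(1 - z / 2) ^ m - (1 + z / 2) ^ m
     = (\<Sum>j\<le>m. of_nat (m choose j) * ((- 1 / 2) ^ j - (1 / 2) ^ j) * (z :: 'a :: field_char_0) ^ j)"
proof -
  have binomial: "(1 + c * z) ^ m = (\<Sum>j\<le>m. of_nat (m choose j) * c ^ j * z ^ j)" for c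
    using binomial_ring[of "c * z" 1 m] by (simp add: add.commute power_mult_distrib mult_ac)
  show ?thesis
    using binomial[of "- 1 / 2"] binomial[of "1 / 2"]
    by (simp add: sum_subtractf[symmetric] algebra_simps)
qed

section \<open>The Bessel polynomial and its zeros\<close>

definition bessel_coeff :: "nat \<Rightarrow> nat \<Rightarrow> real" where
  "bessel_coeff n k = (if k \<le> n then fact (n + k) / (fact (n - k) * fact k * 2 ^ k) else 0)"

lemma bessel_coeff_pos: "k \<le> n \<Longrightarrow> bessel_coeff n k > 0"
  by (simp add: bessel_coeff_def)

lemma bessel_coeff_Suc:
  "2 * real (Suc k) * bessel_coeff n (Suc k) = (real (n * (n + 1)) - real (k * (k + 1))) * bessel_coeff n k"
proof (cases "k < n")
  case True
  then obtain m where n: "n = Suc (k + m)" by (auto dest: less_imp_Suc_add)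
  have facts: "(fact (n + Suc k) :: real) = real (n + Suc k) * fact (n + k)"
    "(fact (n - k) :: real) = real (Suc m) * fact m" "n - Suc k = m"
    "(fact (Suc k) :: real) = real (Suc k) * fact k"
    by (simp_all add: n del: of_nat_Suc)
  have "2 * real (Suc k) * bessel_coeff n (Suc k) = real (n + Suc k) * fact (n + k) / (fact m * fact k * 2 ^ k)"
    using True unfolding bessel_coeff_def facts by (simp add: field_simps del: of_nat_Suc)
  also have "\<dots> = real (Suc m) * real (n + Suc k) * bessel_coeff n k"
    using True unfolding bessel_coeff_def facts by (simp add: field_simps del: of_nat_Suc)
  also have "real (Suc m) * real (n + Suc k) = real (n * (n + 1)) - real (k * (k + 1))"
    by (simp add: n algebra_simps)
  finally show ?thesis .
next
  case False
  then show ?thesis by (cases "k = n") (simp_all add: bessel_coeff_def)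
qed

lemma bessel_coeff_ratio:
  assumes "j \<le> n"
  shows "bessel_coeff n (n - j) / bessel_coeff n n = real (n choose j) * 2 ^ j * fact (2 * n - j) / fact (2 * n)"
proof -
  have "n + (n - j) = 2 * n - j" "n - (n - j) = j" "(2 :: real) ^ n = 2 ^ (n - j) * 2 ^ j"
    using assms by (auto simp flip: power_add)
  then show ?thesis
    using assms by (simp add: bessel_coeff_def binomial_fact mult_2 mult_2_right field_simps)
qed

definition bessel_polynomial :: "nat \<Rightarrow> complex poly" where
  "bessel_polynomial n = (\<Sum>k\<le>n. monom (of_real (bessel_coeff n k)) k)"

lemma coeff_bessel_polynomial: "coeff (bessel_polynomial n) k = of_real (bessel_coeff n k)"
  by (simp add: bessel_polynomial_def coeff_sum bessel_coeff_def)

lemma poly_bessel_polynomial: "poly (bessel_polynomial n) z = bessel_poly n z"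
  unfolding bessel_polynomial_def bessel_poly_def
  by (auto simp: poly_sum poly_monom bessel_coeff_def atMost_atLeast0 power_divide intro!: sum.cong)

lemma degree_bessel_polynomial: "degree (bessel_polynomial n) = n"
  by (intro antisym degree_le le_degree)
     (auto simp: coeff_bessel_polynomial bessel_coeff_def)

lemma poly_bessel_polynomial_0: "poly (bessel_polynomial n) 0 = 1"
  by (simp add: poly_0_coeff_0 coeff_bessel_polynomial bessel_coeff_def)

text \<open>The \<open>k\<close>-fold derivative of the Bessel equation \<open>z^2 y'' + (2z + 2) y' = n(n+1) y\<close>,
  as an operator applied to \<open>y^(k)\<close>.\<close>
definition bessel_ode_op :: "nat \<Rightarrow> nat \<Rightarrow> complex poly \<Rightarrow> complex poly" where
  "bessel_ode_op n k A = monom 1 2 * pderiv (pderiv A) + [:2, 2 * of_nat (k + 1):] * pderiv A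
      + smult (of_nat (k * (k + 1)) - of_nat (n * (n + 1))) A"

lemma coeff_bessel_ode_op:
  "coeff (bessel_ode_op n k A) m =
     (of_nat (m * (m + 1)) + 2 * of_nat (k * m) + of_nat (k * (k + 1)) - of_nat (n * (n + 1))) * coeff A m
     + 2 * of_nat (Suc m) * coeff A (Suc m)"
proof (cases m)
  case 0
  then show ?thesis by (simp add: bessel_ode_op_def coeff_pderiv coeff_monom_mult)
next
  case (Suc i)
  have "coeff (monom 1 2 * pderiv (pderiv A)) m = of_nat (i * Suc i) * coeff A m"
    by (cases i) (simp_all add: Suc coeff_pderiv coeff_monom_mult numeral_2_eq_2, simp add: algebra_simps)
  then show ?thesis by (simp add: bessel_ode_op_def Suc coeff_pderiv) (simp add: algebra_simps)
qed

lemma bessel_ode_op_bessel_polynomial: "bessel_ode_op n 0 (bessel_polynomial n) = 0"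
proof (rule poly_eqI)
  fix m
  have "2 * of_nat (Suc m) * coeff (bessel_polynomial n) (Suc m)
        = (of_nat (n * (n + 1)) - of_nat (m * (m + 1))) * coeff (bessel_polynomial n) m"
    using arg_cong[OF bessel_coeff_Suc[of m n], of complex_of_real]
    by (simp add: coeff_bessel_polynomial)
  then show "coeff (bessel_ode_op n 0 (bessel_polynomial n)) m = coeff 0 m"
    by (simp add: coeff_bessel_ode_op algebra_simps)
qed

lemma pderiv_bessel_ode_op: "pderiv (bessel_ode_op n k A) = bessel_ode_op n (Suc k) (pderiv A)"
  by (rule poly_eqI) (simp add: coeff_pderiv coeff_bessel_ode_op algebra_simps)

lemma bessel_ode_op_higher_pderiv: "bessel_ode_op n k ((pderiv ^^ k) (bessel_polynomial n)) = 0"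
  by (induction k) (simp_all add: bessel_ode_op_bessel_polynomial flip: pderiv_bessel_ode_op)

text \<open>A common root \<open>a\<close> of \<open>y\<^sub>n\<close> and \<open>y\<^sub>n'\<close> is nonzero, so the differentiated equations force
  every derivative of \<open>y\<^sub>n\<close> to vanish at \<open>a\<close>; but the \<open>n\<close>-th derivative is a nonzero constant.\<close>
lemma rsquarefree_bessel_polynomial: "rsquarefree (bessel_polynomial n)"
  unfolding rsquarefree_roots
proof (intro allI notI)
  fix a
  let ?D = "\<lambda>k. (pderiv ^^ k) (bessel_polynomial n)"
  assume root: "poly (bessel_polynomial n) a = 0 \<and> poly (pderiv (bessel_polynomial n)) a = 0"
  then have "a \<noteq> 0" using poly_bessel_polynomial_0 by auto
  have "poly (?D k) a = 0 \<and> poly (?D (Suc k)) a = 0" for k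
  proof (induction k)
    case 0
    then show ?case using root by simp
  next
    case (Suc k)
    have "poly (bessel_ode_op n k (?D k)) a = 0" by (simp add: bessel_ode_op_higher_pderiv)
    then have "a\<^sup>2 * poly (?D (Suc (Suc k))) a = 0"
      using Suc by (simp add: bessel_ode_op_def poly_monom)
    then show ?case using Suc \<open>a \<noteq> 0\<close> by simp
  qed
  moreover have "degree (?D n) = 0"
    by (simp add: degree_higher_pderiv degree_bessel_polynomial)
  then have "poly (?D n) a = coeff (?D n) 0"
    by (simp add: poly_altdef)
  moreover have "coeff (?D n) 0 \<noteq> 0"
    using bessel_coeff_pos[of n n]
    by (simp add: coeff_higher_pderiv coeff_bessel_polynomial pochhammer_fact[symmetric])
  ultimately show False by metis
qed

lemma finite_bessel_zeros: "finite (bessel_zeros n)"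
proof -
  have "bessel_polynomial n \<noteq> 0" using poly_bessel_polynomial_0[of n] by auto
  then show ?thesis
    unfolding bessel_zeros_def poly_bessel_polynomial[symmetric] by (rule poly_roots_finite)
qed

definition bessel_reverse :: "nat \<Rightarrow> complex poly" where
  "bessel_reverse n = (\<Prod>\<alpha>\<in>bessel_zeros n. [:1, -\<alpha>:])"

lemma reflect_bessel_polynomial:
  "reflect_poly (bessel_polynomial n) = smult (of_real (bessel_coeff n n)) (bessel_reverse n)"
proof -
  have "bessel_polynomial n = smult (of_real (bessel_coeff n n)) (\<Prod>\<alpha>\<in>bessel_zeros n. [:-\<alpha>, 1:])"
    using complex_poly_decompose_rsquarefree[OF rsquarefree_bessel_polynomial[of n]]
    by (simp add: bessel_zeros_def poly_bessel_polynomial degree_bessel_polynomial coeff_bessel_polynomial)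
  moreover have "reflect_poly [:-\<alpha>, 1:] = [:1, -\<alpha>:]" for \<alpha> :: complex
    by (rule poly_eqI) (auto simp: coeff_reflect_poly coeff_pCons split: nat.splits)
  ultimately show ?thesis
    by (simp add: bessel_reverse_def reflect_poly_smult reflect_poly_prod)
qed

lemma coeff_bessel_reverse:
  "coeff (bessel_reverse n) i =
     (if i \<le> n then of_real (bessel_coeff n (n - i) / bessel_coeff n n) else 0)"
proof -
  have "of_real (bessel_coeff n n) * coeff (bessel_reverse n) i = coeff (reflect_poly (bessel_polynomial n)) i"
    by (simp add: reflect_bessel_polynomial)
  also have "\<dots> = (if i \<le> n then of_real (bessel_coeff n (n - i)) else 0)"
    by (simp add: coeff_reflect_poly degree_bessel_polynomial coeff_bessel_polynomial)
  finally show ?thesis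
    using bessel_coeff_pos[of n n] by (auto simp: field_simps)
qed

lemma coeff_bessel_reverse_rec:
  "of_nat (Suc m) * (of_nat m - 2 * of_nat n) * coeff (bessel_reverse n) (Suc m)
     + 2 * (of_nat n - of_nat m) * coeff (bessel_reverse n) m = 0"
proof (cases "m < n")
  case True
  then obtain k where n: "n = Suc (m + k)" by (auto dest: less_imp_Suc_add)
  have "2 * real (Suc k) * bessel_coeff n (Suc k) = real (Suc m) * (2 * real n - real m) * bessel_coeff n k"
    using bessel_coeff_Suc[of k n] by (simp add: n algebra_simps)
  then have "(real (Suc m) * (real m - 2 * real n) * bessel_coeff n k
      + 2 * (real n - real m) * bessel_coeff n (Suc k)) / bessel_coeff n n = 0"
    by (simp add: n algebra_simps)
  then have "complex_of_real (real (Suc m) * (real m - 2 * real n) * (bessel_coeff n k / bessel_coeff n n)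
      + 2 * (real n - real m) * (bessel_coeff n (Suc k) / bessel_coeff n n)) = 0"
    by (simp add: add_divide_distrib)
  then show ?thesis
    by (simp add: coeff_bessel_reverse n Suc_diff_le)
next
  case False
  then show ?thesis by (cases "m = n") (simp_all add: coeff_bessel_reverse)
qed

section \<open>The Pad\'e remainder of the exponential\<close>

definition pade_ode :: "nat \<Rightarrow> complex fps \<Rightarrow> complex fps" where
  "pade_ode n A = fps_X * fps_deriv (fps_deriv A) - fps_const 2 * (fps_X + fps_const (of_nat n)) * fps_deriv A
      + fps_const (2 * of_nat n) * A"

lemma pade_ode_nth:
  fixes A :: "complex fps"
  shows "pade_ode n A $ m = of_nat (Suc m) * (of_nat m - 2 * of_nat n) * A $ Suc m + 2 * (of_nat n - of_nat m) * A $ m"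
  by (cases m) (simp_all add: pade_ode_def algebra_simps)

lemma pade_ode_diff: "pade_ode n (A - B) = pade_ode n A - pade_ode n B"
  by (simp add: pade_ode_def algebra_simps)

lemma pade_ode_bessel_reverse: "pade_ode n (fps_of_poly (bessel_reverse n)) = 0"
  by (rule fps_ext) (use coeff_bessel_reverse_rec in \<open>simp add: pade_ode_nth algebra_simps\<close>)

lemma pade_ode_exp_mult_compose_uminus_X:
  "pade_ode n (fps_exp 2 * (A oo - fps_X)) = - fps_exp 2 * (pade_ode n A oo - fps_X)"
proof -
  have "fps_X oo - fps_X = (- fps_X :: complex fps)"
    by (rule fps_ext) (simp add: fps_compose_uminus')
  then show ?thesis
    by (simp add: pade_ode_def fps_compose_add_distrib fps_compose_sub_distrib fps_compose_mult_distrib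
        fps_deriv_compose_uminus_X algebra_simps)
qed

text \<open>\<open>Q(z)\<close> and \<open>e^(2z) Q(-z)\<close> solve the same equation \<open>pade_ode n\<close>, whose coefficient recurrence
  forces a solution vanishing at \<open>0\<close> to vanish to order \<open>2n + 1\<close>: \<open>Q(z)/Q(-z)\<close> is the diagonal
  Pad\'e approximant of \<open>e^(2z)\<close>.\<close>
definition pade_remainder :: "nat \<Rightarrow> complex fps" where
  "pade_remainder n = fps_of_poly (bessel_reverse n) - fps_exp 2 * (fps_of_poly (bessel_reverse n) oo - fps_X)"

lemma pade_ode_pade_remainder: "pade_ode n (pade_remainder n) = 0"
  by (simp add: pade_remainder_def pade_ode_diff pade_ode_exp_mult_compose_uminus_X pade_ode_bessel_reverse)

lemma pade_ode_nth_eq_0: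
  fixes A :: "complex fps"
  assumes "pade_ode n A = 0" "A $ 0 = 0" "m \<le> 2 * n"
  shows "A $ m = 0"
  using assms(3)
proof (induction m)
  case 0
  then show ?case using assms(2) by simp
next
  case (Suc m)
  have "of_nat (Suc m) * (of_nat m - 2 * of_nat n) * A $ Suc m = (0 :: complex)"
    using Suc arg_cong[OF assms(1), of "\<lambda>A. A $ m"] by (simp add: pade_ode_nth)
  moreover have "(of_nat m :: complex) \<noteq> 2 * of_nat n"
    using Suc.prems by (metis Suc_n_not_le_n of_nat_eq_iff of_nat_mult of_nat_numeral)
  moreover have "of_nat (Suc m) \<noteq> (0 :: complex)" by (rule of_nat_neq_0)
  ultimately show ?case by simp
qed

lemma pade_remainder_nth_eq_0: "m \<le> 2 * n \<Longrightarrow> pade_remainder n $ m = 0"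
  by (rule pade_ode_nth_eq_0[OF pade_ode_pade_remainder])
     (simp add: pade_remainder_def coeff_bessel_reverse bessel_coeff_pos)

lemma pade_remainder_nth_top:
  "pade_remainder n $ (2 * n + 1) =
     - of_real (2 ^ (2 * n + 1) / fact (2 * n) * ((-1) ^ n * (fact n)\<^sup>2 / fact (2 * n + 1)))"
proof -
  define N where "N = 2 * n + 1"
  define B where "B = fps_of_poly (bessel_reverse n) oo - fps_X"
  have B_nth: "B $ j = (if j \<le> n then of_real ((-1) ^ j * (bessel_coeff n (n - j) / bessel_coeff n n)) else 0)"
    for j by (simp add: B_def fps_compose_uminus' coeff_bessel_reverse)
  have summand: "fps_exp 2 $ (N - j) * B $ j
      = of_real (2 ^ N / fact (2 * n) * ((-1) ^ j * real (n choose j) / real (N - j)))" if "j \<le> n" for j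
  proof -
    define k where "k = 2 * n - j"
    have N: "N = Suc k + j" "N - j = Suc k" using that by (simp_all add: N_def k_def)
    have "fps_exp 2 $ (N - j) * B $ j
        = of_real (2 ^ Suc k / fact (Suc k) * ((-1) ^ j * (bessel_coeff n (n - j) / bessel_coeff n n)))"
      using that by (simp add: N B_nth fps_exp_def)
    also have "2 ^ Suc k / fact (Suc k) * ((-1) ^ j * (bessel_coeff n (n - j) / bessel_coeff n n))
        = 2 ^ N / fact (2 * n) * ((-1) ^ j * real (n choose j) / real (N - j))"
    proof -
      have ratio: "bessel_coeff n (n - j) / bessel_coeff n n = real (n choose j) * 2 ^ j * fact k / fact (2 * n)"
        using bessel_coeff_ratio[OF that] by (simp add: k_def)
      show ?thesis
        unfolding ratio fact_Suc N power_add by (simp add: field_simps del: of_nat_Suc)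
    qed
    finally show ?thesis .
  qed
  have "(fps_exp 2 * B) $ N = (\<Sum>j=0..N. fps_exp 2 $ (N - j) * B $ j)"
    unfolding fps_mult_nth by (subst sum.atLeastAtMost_rev) simp
  also have "\<dots> = (\<Sum>j\<le>n. fps_exp 2 $ (N - j) * B $ j)"
    by (rule sum.mono_neutral_right) (auto simp: B_nth N_def)
  also have "\<dots> = (\<Sum>j\<le>n. of_real (2 ^ N / fact (2 * n) * ((-1) ^ j * real (n choose j) / real (N - j))))"
    by (intro sum.cong refl summand) simp
  also have "\<dots> = of_real (2 ^ N / fact (2 * n) * (\<Sum>j\<le>n. (-1) ^ j * real (n choose j) / real (N - j)))"
    by (simp only: of_real_sum[symmetric] sum_distrib_left)
  finally have "(fps_exp 2 * B) $ N = of_real (2 ^ N / fact (2 * n) * ((-1) ^ n * (fact n)\<^sup>2 / fact N))"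
    by (simp only: N_def sum_alternating_binomial_divide_reflected)
  then show ?thesis
    by (simp add: pade_remainder_def N_def coeff_bessel_reverse flip: B_def)
qed

section \<open>Odd power sums of the zeros\<close>

definition bessel_power_sum :: "nat \<Rightarrow> nat \<Rightarrow> complex" where
  "bessel_power_sum n p = (\<Sum>\<alpha>\<in>bessel_zeros n. \<alpha> ^ p)"

lemma fps_deriv_bessel_reverse:
  "fps_deriv (fps_of_poly (bessel_reverse n)) =
     fps_of_poly (bessel_reverse n) * Abs_fps (\<lambda>j. - bessel_power_sum n (Suc j))"
proof -
  have "fps_of_poly (bessel_reverse n) = (\<Prod>\<alpha>\<in>bessel_zeros n. 1 - fps_const \<alpha> * fps_X)"
    by (simp add: bessel_reverse_def fps_of_poly_prod fps_of_poly_linear' algebra_simps flip: fps_const_neg)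
  then show ?thesis
    using fps_deriv_prod_linear_factors[OF finite_bessel_zeros]
    by (simp add: bessel_power_sum_def)
qed

lemma pade_remainder_log_deriv:
  fixes n :: nat
  defines "Q \<equiv> fps_of_poly (bessel_reverse n)" and "L \<equiv> Abs_fps (\<lambda>j. - bessel_power_sum n (Suc j))"
  shows "fps_exp 2 * (Q oo - fps_X) * (2 - L - (L oo - fps_X))
           = pade_remainder n * L - fps_deriv (pade_remainder n)"
proof -
  have Q': "fps_deriv Q = Q * L"
    unfolding Q_def L_def by (rule fps_deriv_bessel_reverse)
  then have "fps_deriv (Q oo - fps_X) = - ((Q oo - fps_X) * (L oo - fps_X))"
    by (simp add: fps_deriv_compose_uminus_X fps_compose_mult_distrib)
  then show ?thesis
    by (simp add: pade_remainder_def Q' algebra_simps flip: Q_def)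
qed

lemma bessel_power_sum_odd:
  assumes "k \<le> n"
  shows "(if k = 0 then 2 else 0) + 2 * bessel_power_sum n (2 * k + 1)
           = (if k = n then - of_nat (2 * n + 1) * pade_remainder n $ (2 * n + 1) else 0)"
proof -
  define Q where "Q = fps_of_poly (bessel_reverse n)"
  define L where "L = Abs_fps (\<lambda>j. - bessel_power_sum n (Suc j))"
  define E where "E = fps_exp 2 * (Q oo - fps_X)"
  define R where "R = pade_remainder n"
  define W where "W = 2 - L - (L oo - fps_X)"
  define D where "D = R * L - fps_deriv R"
  have E0: "E $ 0 = 1"
    using bessel_coeff_pos[of n n] by (simp add: E_def Q_def coeff_bessel_reverse)
  have "W = (inverse E * E) * W"
    by (simp add: inverse_mult_eq_1 E0)
  also have "\<dots> = inverse E * D"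
    using pade_remainder_log_deriv[of n] by (simp add: E_def Q_def L_def R_def W_def D_def mult.assoc)
  finally have W_eq: "W = inverse E * D" .
  have R_low: "R $ i = 0" if "i < 2 * n + 1" for i
    using that by (simp add: R_def pade_remainder_nth_eq_0)
  have RL: "(R * L) $ i = 0" if "i \<le> 2 * n" for i
    using fps_mult_nth_low_vanishing[of "2 * n + 1" R i L] R_low that by (simp add: mult.commute)
  have D_low: "D $ i = 0" if "i < 2 * n" for i
    using that RL R_low[of "Suc i"] by (simp add: D_def)
  have D_top: "D $ (2 * n) = - of_nat (2 * n + 1) * R $ (2 * n + 1)"
    using RL[of "2 * n"] by (simp add: D_def algebra_simps)
  have "W $ (2 * k) = (if k = n then - of_nat (2 * n + 1) * R $ (2 * n + 1) else 0)"
    using fps_mult_nth_low_vanishing[of "2 * n" D "2 * k" "inverse E"] D_low D_top E0 assms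
    by (simp add: W_eq)
  moreover have "W $ (2 * k) = (if k = 0 then 2 else 0) + 2 * bessel_power_sum n (2 * k + 1)"
    by (simp add: W_def L_def fps_compose_uminus' fps_numeral_nth)
  ultimately show ?thesis by (metis R_def)
qed

lemma bessel_power_sum_1: "n \<ge> 1 \<Longrightarrow> bessel_power_sum n 1 = -1"
  using bessel_power_sum_odd[of 0 n] by (simp add: add_eq_0_iff)

lemma bessel_power_sum_odd_eq_0: "0 < k \<Longrightarrow> k < n \<Longrightarrow> bessel_power_sum n (2 * k + 1) = 0"
  using bessel_power_sum_odd[of k n] by simp

lemma bessel_power_sum_top:
  assumes "n \<ge> 1"
  shows "bessel_power_sum n (2 * n + 1) = (-1) ^ n * 2 ^ (2 * n) * (fact n)\<^sup>2 / (fact (2 * n))\<^sup>2"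
proof -
  define N where "N = 2 * n + 1"
  have "(fact N :: real) = real N * fact (2 * n)"
    by (simp add: N_def del: of_nat_Suc)
  then have real_eq: "real N * (2 ^ N / fact (2 * n) * ((-1) ^ n * (fact n)\<^sup>2 / fact N))
      = 2 * ((-1) ^ n * 2 ^ (2 * n) * (fact n)\<^sup>2 / (fact (2 * n))\<^sup>2)"
    by (simp add: N_def power2_eq_square del: of_nat_Suc)
  have "2 * bessel_power_sum n N = - of_nat N * pade_remainder n $ N"
    using bessel_power_sum_odd[of n n] assms by (simp add: N_def)
  also have "\<dots> = of_real (real N * (2 ^ N / fact (2 * n) * ((-1) ^ n * (fact n)\<^sup>2 / fact N)))"
    unfolding N_def pade_remainder_nth_top by (simp only: of_real_mult of_real_of_nat_eq minus_mult_minus)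
  also have "\<dots> = 2 * ((-1) ^ n * 2 ^ (2 * n) * (fact n)\<^sup>2 / (fact (2 * n))\<^sup>2)"
    unfolding real_eq by simp
  finally show ?thesis
    unfolding N_def mult_cancel_left by simp
qed

text \<open>The coefficient of \<open>f\<^sub>m z^m\<close> in \<open>\<Sum>\<^sub>k (f(a\<^sub>n\<^sub>k z) - f(b\<^sub>n\<^sub>k z))\<close>.\<close>
definition bessel_shift_moment :: "nat \<Rightarrow> nat \<Rightarrow> complex" where
  "bessel_shift_moment n m = (\<Sum>\<alpha>\<in>bessel_zeros n. (1 - \<alpha> / 2) ^ m - (1 + \<alpha> / 2) ^ m)"

lemma bessel_shift_moment_eq:
  assumes "n \<ge> 1" and "m \<le> 2 * n + 1"
  shows "bessel_shift_moment n m
           = of_nat m - (if m = 2 * n + 1 then (-1) ^ n * (fact n)\<^sup>2 / (fact (2 * n))\<^sup>2 else 0)"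
proof -
  define t where "t j = of_nat (m choose j) * ((- 1 / 2) ^ j - (1 / 2) ^ j) * bessel_power_sum n j" for j
  have odd_terms: "t j = 0" if "j \<le> 2 * n + 1" "j \<notin> {1, 2 * n + 1}" for j
  proof (cases "even j")
    case True
    then show ?thesis by (simp add: t_def power_divide)
  next
    case False
    then obtain k where "j = 2 * k + 1" by (metis oddE)
    with that show ?thesis using bessel_power_sum_odd_eq_0[of k n] by (simp add: t_def)
  qed
  have "bessel_shift_moment n m = (\<Sum>j\<le>m. t j)"
    unfolding bessel_shift_moment_def binomial_difference_expansion t_def bessel_power_sum_def
    by (subst sum.swap) (simp add: sum_distrib_left)
  also have "\<dots> = (\<Sum>j\<le>2 * n + 1. t j)"
    by (rule sum.mono_neutral_left) (use assms(2) in \<open>auto simp: t_def\<close>)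
  also have "\<dots> = (\<Sum>j\<in>{1, 2 * n + 1}. t j)"
    by (rule sum.mono_neutral_right) (auto intro: odd_terms)
  also have "\<dots> = t 1 + t (2 * n + 1)"
    using assms(1) by simp
  also have "t 1 = of_nat m"
    using bessel_power_sum_1[OF assms(1)] by (simp add: t_def)
  also have "t (2 * n + 1) = - (if m = 2 * n + 1 then (-1) ^ n * (fact n)\<^sup>2 / (fact (2 * n))\<^sup>2 else 0)"
    using assms(2) bessel_power_sum_top[OF assms(1)] by (auto simp: t_def field_simps)
  finally show ?thesis by simp
qed

section \<open>The remainder\<close>

lemma bessel_remainder_poly_eq_0:
  assumes "n \<ge> 1" and "degree p \<le> 2 * n"
  shows "bessel_remainder n (poly p) z = 0"
proof -
  have p: "poly p = (\<lambda>w. \<Sum>i\<le>2 * n. coeff p i * w ^ i)"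
    using assms(2) by (auto simp: fun_eq_iff poly_altdef intro!: sum.mono_neutral_left intro: le_degree)
  have "deriv (poly p) z = (\<Sum>i\<le>2 * n. of_nat i * z ^ (i - 1) * coeff p i)"
    unfolding p by (rule DERIV_imp_deriv) (auto intro!: derivative_eq_intros)
  then have "z * deriv (poly p) z = (\<Sum>i\<le>2 * n. coeff p i * z ^ i * of_nat i)"
    by (auto simp: sum_distrib_left power_eq_if mult_ac intro!: sum.cong)
  also have "\<dots> = (\<Sum>i\<le>2 * n. coeff p i * z ^ i * bessel_shift_moment n i)"
    using assms(1) by (intro sum.cong refl) (simp add: bessel_shift_moment_eq)
  also have "\<dots> = (\<Sum>\<alpha>\<in>bessel_zeros n. poly p ((1 - \<alpha> / 2) * z) - poly p ((1 + \<alpha> / 2) * z))"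
    unfolding p bessel_shift_moment_def sum_distrib_left sum_subtractf[symmetric] power_mult_distrib
    by (subst sum.swap) (simp add: algebra_simps)
  finally show ?thesis
    by (simp add: bessel_remainder_def)
qed

lemma has_fps_expansion_taylor_coeff:
  assumes "R > 0" and "f holomorphic_on ball 0 R"
  shows "f has_fps_expansion Abs_fps (taylor_coeff f)"
  using has_fps_expansion_fps_expansion[OF open_ball _ assms(2)] assms(1)
  by (simp add: fps_expansion_def taylor_coeff_def[abs_def])

lemma has_fps_expansion_bessel_remainder:
  assumes "f has_fps_expansion F"
  shows "bessel_remainder n f has_fps_expansion
           Abs_fps (\<lambda>m. (of_nat m - bessel_shift_moment n m) * F $ m)"
proof -
  define S where "S u = Abs_fps (\<lambda>m. u ^ m * F $ m)" for u
  have scaled: "(\<lambda>z. f (u * z)) has_fps_expansion S u" for u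
    using has_fps_expansion_compose[OF assms has_fps_expansion_cmult_left[OF has_fps_expansion_fps_X, of u]]
    by (simp add: o_def S_def fps_compose_linear)
  have "bessel_remainder n f = (\<lambda>z. z * deriv f z - (\<Sum>\<alpha>\<in>bessel_zeros n. f ((1 - \<alpha> / 2) * z) - f ((1 + \<alpha> / 2) * z)))"
    by (simp add: fun_eq_iff bessel_remainder_def)
  moreover have "(\<lambda>z. z * deriv f z - (\<Sum>\<alpha>\<in>bessel_zeros n. f ((1 - \<alpha> / 2) * z) - f ((1 + \<alpha> / 2) * z)))
      has_fps_expansion fps_X * fps_deriv F - (\<Sum>\<alpha>\<in>bessel_zeros n. S (1 - \<alpha> / 2) - S (1 + \<alpha> / 2))"
    by (intro fps_expansion_intros assms scaled)
  moreover have "fps_X * fps_deriv F - (\<Sum>\<alpha>\<in>bessel_zeros n. S (1 - \<alpha> / 2) - S (1 + \<alpha> / 2))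
      = Abs_fps (\<lambda>m. (of_nat m - bessel_shift_moment n m) * F $ m)"
  proof (rule fps_ext)
    fix m
    have "(fps_X * fps_deriv F) $ m = of_nat m * F $ m"
      by (cases m) (simp_all add: algebra_simps)
    then show "(fps_X * fps_deriv F - (\<Sum>\<alpha>\<in>bessel_zeros n. S (1 - \<alpha> / 2) - S (1 + \<alpha> / 2))) $ m
        = Abs_fps (\<lambda>m. (of_nat m - bessel_shift_moment n m) * F $ m) $ m"
      by (simp add: S_def bessel_shift_moment_def fps_sum_nth sum_distrib_right left_diff_distrib)
  qed
  ultimately show ?thesis by simp
qed

theorem mainTheorem2:
  fixes n :: nat and f :: "complex \<Rightarrow> complex" and R :: real
  assumes "n \<ge> 1" and "R > 0" and "f holomorphic_on ball 0 R"
  shows "(\<lambda>z. bessel_remainder n f z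
            - (-1)^n * (fact n)^2 / (fact (2*n))^2 * taylor_coeff f (2*n+1) * z^(2*n+1))
           \<in> O[at 0](\<lambda>z. z^(2*n+2))
         \<and> (\<forall>p :: complex poly. degree p \<le> 2*n \<longrightarrow> (\<forall>z. bessel_remainder n (poly p) z = 0))"
proof
  define c where "c = (-1) ^ n * (fact n)\<^sup>2 / (fact (2 * n))\<^sup>2 * taylor_coeff f (2 * n + 1)"
  define H where "H = Abs_fps (\<lambda>m. (of_nat m - bessel_shift_moment n m) * taylor_coeff f m)"
  have "bessel_remainder n f has_fps_expansion H"
    using has_fps_expansion_bessel_remainder[OF has_fps_expansion_taylor_coeff[OF assms(2,3)]]
    by (simp add: H_def)
  then have "(\<lambda>z. bessel_remainder n f z - c * z ^ (2 * n + 1)) has_fps_expansion H - fps_const c * fps_X ^ (2 * n + 1)"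
    by (intro fps_expansion_intros)
  moreover have "(H - fps_const c * fps_X ^ (2 * n + 1)) $ m = 0" if "m < 2 * n + 2" for m
    using that bessel_shift_moment_eq[OF assms(1), of m] by (auto simp: H_def c_def)
  ultimately have "(\<lambda>z. bessel_remainder n f z - c * z ^ (2 * n + 1)) \<in> O[at 0](\<lambda>z. z ^ (2 * n + 2))"
    by (rule bigo_power_at_0_if_fps_nth_vanish)
  then show "(\<lambda>z. bessel_remainder n f z
            - (-1)^n * (fact n)^2 / (fact (2*n))^2 * taylor_coeff f (2*n+1) * z^(2*n+1))
           \<in> O[at 0](\<lambda>z. z^(2*n+2))"
    by (simp add: c_def)
next
  show "\<forall>p :: complex poly. degree p \<le> 2*n \<longrightarrow> (\<forall>z. bessel_remainder n (poly p) z = 0)"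
    using bessel_remainder_poly_eq_0[OF assms(1)] by blast
qed

end
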